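(* Let $n\ge 1$ and let $\mathcal{M}^n$ denote the set of real symmetric positive semidefinite $n\times n$ matrices. Let $F:(\mathcal{M}^n)^n\to\mathbb{R}$ be a function such that (i) $F(A_1,\dots,A_n)\ge 0$ for all $A_1,\dots,A_n\in\mathcal{M}^n$; (ii) $F$ is additive in each variable, i.e. $F(\dots,A+A',\dots)=F(\dots,A,\dots)+F(\dots,A',\dots)$ in each argument, the other arguments being fixed; (iii) $F(A_1,\dots,A_n)=0$ whenever two of the arguments $A_i,A_j$ ($i\neq j$) are proportional matrices of rank one. Then there is a constant $a\ge 0$ such that $F(A_1,\dots,A_n)=a\,D(A_1,\dots,A_n)$ for all $A_1,\dots,A_n\in\mathcal{M}^n$, where $D$ is the mixed discriminant.
   Context: The mixed discriminant $D:(\mathcal{M}^n)^n\to\mathbb{R}$ is the unique symmetric function such that $\det(\lambda_1A_1+\dots+\lambda_mA_m)=\sum_{i_1,\dots,i_n=1}^m\lambda_{i_1}\cdots\lambda_{i_n}D(A_{i_1},\dots,A_{i_n})$ for all $m\in\mathbb{N}$, $A_1,\dots,A_m\in\mathcal{M}^n$ and $\lambda_1,\dots,\lambda_m\ge 0$. Equivalently, $D(A_1,\dots,A_n)=\frac{1}{n!}\sum_{\sigma\in S(n)}\det(A_{\sigma(1)}^{(1)},\dots,A_{\sigma(n)}^{(n)})$, where $A^{(i)}$ denotes the $i$th column of $A$ and $S(n)$ is the symmetric group. *)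

theory Defs
  imports "HOL-Analysis.Analysis"
begin

definition psd :: "real^'n^'n \<Rightarrow> bool" where
  "psd A \<longleftrightarrow> transpose A = A \<and> (\<forall>x. 0 \<le> x \<bullet> (A *v x))"

text \<open>Mixed discriminant via the permutation formula: column j of the matrix
  is the j-th column of A (sigma j).\<close>
definition mixed_discr :: "('n::finite \<Rightarrow> real^'n^'n) \<Rightarrow> real" where
  "mixed_discr A = (1 / fact CARD('n)) *
     (\<Sum>\<sigma> | \<sigma> permutes (UNIV::'n set). det (\<chi> i j. A (\<sigma> j) $ i $ j))"

end

theory Submission
  imports Defs
begin

text \<open>
  Both F and a D, where a = n! F(e_1 e_1^T, ..., e_n e_n^T), are additive in each argument,
  so it suffices that they agree on tuples of rank-one matrices x_1 x_1^T, ..., x_n x_n^T: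
  every psd M becomes a sum of rank-one matrices after adding another such sum to it (one
  pair of rank-one terms cancels each off-diagonal entry), so additivity propagates the
  agreement one argument at a time. On rank-one tuples, f(x_1, ..., x_n) = F(x_1 x_1^T, ...,
  x_n x_n^T) is quadratic in each x_i by additivity and nonnegativity, and unchanged by
  x_i := x_i + t x_j because the cross terms vanish by hypothesis (iii). Reducing a matrix W
  with columns x_k to elementary matrices then gives f = det(W)^2 f(I), and likewise
  D(x_1 x_1^T, ..., x_n x_n^T) = det(W)^2 / n!.
\<close>

definition outer_prod :: "real^'n \<Rightarrow> real^'n^'n" where
  "outer_prod x = (\<chi> i j. x$i * x$j)"

lemma outer_prod_mult_vec: "outer_prod x *v y = (x \<bullet> y) *\<^sub>R x"
  by (simp add: outer_prod_def matrix_vector_mult_def inner_vec_def vec_eq_iff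
      sum_distrib_left sum_distrib_right mult_ac)

lemma outer_prod_scaleR: "outer_prod (c *\<^sub>R x) = c\<^sup>2 *\<^sub>R outer_prod x"
  by (simp add: outer_prod_def vec_eq_iff power2_eq_square)

lemma outer_prod_zero [simp]: "outer_prod 0 = 0"
  by (simp add: outer_prod_def vec_eq_iff)

lemma rank_outer_prod:
  fixes x :: "real^'n"
  assumes "x \<noteq> 0"
  shows "rank (outer_prod x) = 1"
proof -
  define C :: "real^1^'n" where "C = (\<chi> i j. x$i)"
  define R :: "real^'n^1" where "R = (\<chi> i j. x$j)"
  have "outer_prod x = C ** R"
    by (simp add: outer_prod_def C_def R_def matrix_matrix_mult_def vec_eq_iff)
  then have "rank (outer_prod x) \<le> rank R" by (simp add: rank_mul_le_right)
  also have "\<dots> \<le> 1" using rank_bound[of R] by simp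
  finally have "rank (outer_prod x) \<le> 1" .
  moreover obtain i where "x$i \<noteq> 0" using assms by (auto simp: vec_eq_iff)
  then have "outer_prod x \<noteq> 0" by (auto simp: outer_prod_def vec_eq_iff)
  then have "rank (outer_prod x) \<noteq> 0" by (simp add: rank_eq_0)
  ultimately show ?thesis by linarith
qed

lemma psd_outer_prod: "psd (outer_prod x)"
  unfolding psd_def outer_prod_mult_vec
  by (auto simp: outer_prod_def transpose_def vec_eq_iff mult.commute inner_commute)

lemma psd_zero: "psd 0"
  unfolding psd_def by (auto simp: transpose_def vec_eq_iff matrix_vector_mult_def inner_vec_def)

lemma psd_add: "psd A \<Longrightarrow> psd B \<Longrightarrow> psd (A + B)"
  unfolding psd_def
  by (auto simp: transpose_def vec_eq_iff matrix_vector_mult_add_rdistrib inner_add_right)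

lemma psd_sum: "finite K \<Longrightarrow> (\<And>k. k \<in> K \<Longrightarrow> psd (X k)) \<Longrightarrow> psd (\<Sum>k\<in>K. X k)"
  by (induction K rule: finite_induct) (auto intro: psd_add psd_zero)

lemma psd_scaleR: "psd A \<Longrightarrow> 0 \<le> c \<Longrightarrow> psd (c *\<^sub>R A)"
  unfolding psd_def by (auto simp: transpose_scalar scaleR_matrix_vector_assoc[symmetric])

lemma psd_symmetric: "psd M \<Longrightarrow> M$p$q = M$q$p"
  unfolding psd_def by (metis transpose_def vec_lambda_beta)

lemma psd_diag_nonneg: "psd M \<Longrightarrow> 0 \<le> M$p$p"
proof -
  assume "psd M"
  then have "0 \<le> axis p 1 \<bullet> (M *v axis p 1)" unfolding psd_def by blast
  also have "axis p 1 \<bullet> (M *v axis p 1) = M$p$p"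
    by (simp add: matrix_vector_mult_basis inner_commute[of "axis p 1"] inner_axis column_def)
  finally show ?thesis .
qed

lemma additive_nonneg_imp_linear:
  fixes g :: "real \<Rightarrow> real"
  assumes add: "\<And>s t. 0 \<le> s \<Longrightarrow> 0 \<le> t \<Longrightarrow> g (s + t) = g s + g t"
    and nonneg: "\<And>s. 0 \<le> s \<Longrightarrow> 0 \<le> g s"
    and "0 \<le> s"
  shows "g s = s * g 1"
proof -
  have g0: "g 0 = 0" using add[of 0 0] by simp
  have mult: "g (real k * t) = real k * g t" if "0 \<le> t" for k t
  proof (induction k)
    case (Suc k)
    have "g (real (Suc k) * t) = g (real k * t + t)" by (simp add: algebra_simps)
    also have "\<dots> = g (real k * t) + g t" using that by (intro add) auto
    finally show ?case using Suc by (simp add: algebra_simps)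
  qed (simp add: g0)
  have g1: "0 \<le> g 1" using nonneg by simp
  have bound: "\<bar>real N * (g s - s * g 1)\<bar> \<le> g 1" for N :: nat
  proof -
    define k where "k = nat \<lfloor>real N * s\<rfloor>"
    define r where "r = real N * s - real k"
    have r: "0 \<le> r" "r < 1"
      using \<open>0 \<le> s\<close> unfolding r_def k_def by (auto simp: of_nat_nat) linarith+
    have "real N * g s = g (real N * s)" using mult \<open>0 \<le> s\<close> by simp
    also have "\<dots> = g (real k * 1 + r)" by (simp add: r_def)
    also have "\<dots> = real k * g 1 + g r" using add[of "real k * 1" r] mult[of 1 k] r by simp
    finally have "real N * (g s - s * g 1) = g r - r * g 1" by (simp add: r_def algebra_simps)
    moreover have "g 1 = g r + g (1 - r)" using add[of r "1 - r"] r by simp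
    moreover have "0 \<le> g r" "0 \<le> g (1 - r)" using nonneg r by auto
    moreover have "0 \<le> r * g 1" "r * g 1 \<le> g 1" using r g1 by (auto simp: mult_left_le_one_le)
    ultimately show ?thesis by auto
  qed
  show ?thesis
  proof (rule ccontr)
    assume "g s \<noteq> s * g 1"
    then have e: "\<bar>g s - s * g 1\<bar> > 0" by simp
    obtain N :: nat where "g 1 / \<bar>g s - s * g 1\<bar> < real N" using reals_Archimedean2 by blast
    with e have "g 1 < real N * \<bar>g s - s * g 1\<bar>" by (simp add: divide_less_eq mult.commute)
    with bound[of N] show False by (simp add: abs_mult)
  qed
qed

lemma second_difference_zero_imp_affine:
  fixes q :: "nat \<Rightarrow> real"
  assumes "\<And>k. q (k + 2) + q k = 2 * q (k + 1)"
  shows "q k = q 0 + real k * (q 1 - q 0)"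
proof -
  have "q k = q 0 + real k * (q 1 - q 0) \<and> q (k + 1) = q 0 + real (k + 1) * (q 1 - q 0)"
  proof (induction k)
    case (Suc k)
    then show ?case using assms[of k] by (simp add: algebra_simps)
  qed simp
  then show ?thesis by simp
qed

lemma nonneg_affine_imp_slope_nonneg:
  fixes c d :: real
  assumes "\<And>k::nat. 0 \<le> c + real k * d"
  shows "0 \<le> d"
proof (rule ccontr)
  assume "\<not> 0 \<le> d"
  obtain k :: nat where "c / (- d) < real k" using reals_Archimedean2 by blast
  then have "c / (- d) * (- d) < real k * (- d)"
    using \<open>\<not> 0 \<le> d\<close> by (intro mult_strict_right_mono) auto
  then have "c < real k * (- d)" using \<open>\<not> 0 \<le> d\<close> by simp
  with assms[of k] show False by (simp add: algebra_simps)
qed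

text \<open>Along the integers p is affine in both directions; nonnegativity forces both slopes,
  which sum to zero, to be nonnegative.\<close>
lemma nonneg_jensen_equation_imp_1_eq_0:
  fixes p :: "real \<Rightarrow> real"
  assumes nonneg: "\<And>s. 0 \<le> p s" and jensen: "\<And>s t. p (s + t) + p (s - t) = 2 * p s"
  shows "p 1 = p 0"
proof -
  have pos: "p (real k) = p 0 + real k * (p 1 - p 0)" for k
    using second_difference_zero_imp_affine[of "\<lambda>k. p (real k)"] jensen[of "real _ + 1" 1]
    by (simp add: algebra_simps)
  have neg: "p (- real k) = p 0 + real k * (p (-1) - p 0)" for k
  proof -
    have "p (- real (k + 2)) + p (- real k) = 2 * p (- real (k + 1))" for k
    proof -
      have "- real (k + 1) + 1 = - real k" "- real (k + 1) - 1 = - real (k + 2)" by simp_all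
      with jensen[of "- real (k + 1)" 1] show ?thesis by simp
    qed
    from second_difference_zero_imp_affine[of "\<lambda>k. p (- real k)", OF this] show ?thesis
      by simp
  qed
  have "0 \<le> p 0 + real k * (p 1 - p 0)" for k using pos[of k] nonneg[of "real k"] by simp
  then have "0 \<le> p 1 - p 0" by (rule nonneg_affine_imp_slope_nonneg)
  moreover have "0 \<le> p 0 + real k * (p (-1) - p 0)" for k
    using neg[of k] nonneg[of "- real k"] by simp
  then have "0 \<le> p (-1) - p 0" by (rule nonneg_affine_imp_slope_nonneg)
  moreover have "p 1 + p (-1) = 2 * p 0" using jensen[of 0 1] by simp
  ultimately show ?thesis by simp
qed

lemma nonneg_jensen_equation_imp_const:
  fixes p :: "real \<Rightarrow> real"
  assumes nonneg: "\<And>s. 0 \<le> p s" and jensen: "\<And>s t. p (s + t) + p (s - t) = 2 * p s"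
  shows "p s = p 0"
proof -
  have "p (s * 1) = p (s * 0)"
  proof (rule nonneg_jensen_equation_imp_1_eq_0)
    fix a b
    show "p (s * (a + b)) + p (s * (a - b)) = 2 * p (s * a)"
      using jensen[of "s * a" "s * b"] by (simp only: distrib_left right_diff_distrib)
  qed (rule nonneg)
  then show ?thesis by simp
qed

locale squared_volume =
  fixes f :: "('n::finite \<Rightarrow> real^'n) \<Rightarrow> real"
  assumes add_multiple: "i \<noteq> j \<Longrightarrow> f (v(i := v i + t *\<^sub>R v j)) = f v"
    and scale: "f (v(i := c *\<^sub>R v i)) = c\<^sup>2 * f v"
begin

lemma zero_vector: "f (v(i := 0)) = 0"
  using scale[of v i 0] by simp

lemma swap:
  assumes "m \<noteq> n"
  shows "f (v(m := v n, n := v m)) = f v"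
proof -
  define w1 where "w1 = v(m := v m + 1 *\<^sub>R v n)"
  define w2 where "w2 = w1(n := w1 n + (-1) *\<^sub>R w1 m)"
  define w3 where "w3 = w2(m := w2 m + 1 *\<^sub>R w2 n)"
  have "f w1 = f v" unfolding w1_def using assms by (rule add_multiple)
  moreover have "f w2 = f w1" unfolding w2_def using assms by (intro add_multiple) auto
  moreover have "f w3 = f w2" unfolding w3_def using assms by (intro add_multiple) auto
  moreover have "w3(n := (-1) *\<^sub>R w3 n) = v(m := v n, n := v m)"
    using assms by (auto simp: w1_def w2_def w3_def fun_eq_iff)
  ultimately show ?thesis using scale[of w3 n "-1"] by simp
qed

lemma add_combination:
  assumes "finite S" "i \<notin> S"
  shows "f (v(i := v i + (\<Sum>k\<in>S. d k *\<^sub>R v k))) = f v"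
  using assms
proof (induction S rule: finite_induct)
  case (insert j S)
  define w where "w = v(i := v i + (\<Sum>k\<in>S. d k *\<^sub>R v k))"
  have "i \<noteq> j" using insert by auto
  have "v(i := v i + (\<Sum>k\<in>insert j S. d k *\<^sub>R v k)) = w(i := w i + d j *\<^sub>R w j)"
    using insert \<open>i \<noteq> j\<close> by (auto simp: w_def fun_eq_iff algebra_simps)
  moreover have "f (w(i := w i + d j *\<^sub>R w j)) = f w" using \<open>i \<noteq> j\<close> by (rule add_multiple)
  moreover have "f w = f v" unfolding w_def using insert by (simp add: fun_upd_def)
  ultimately show ?case by (simp only:)
qed (simp add: fun_upd_idem)

lemma singular_columns:
  fixes W :: "real^'n^'n"
  assumes "det W = 0"
  shows "f (\<lambda>k. column k W) = 0"
proof -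
  define v where "v = (\<lambda>k. column k W)"
  have "rank W \<noteq> CARD('n)" using assms det_eq_0_rank[of W] by simp
  then obtain x where x: "x \<noteq> 0" "W *v x = 0"
    using matrix_nonfull_linear_equations_eq[of W] by blast
  then obtain i where "x$i \<noteq> 0" by (auto simp: vec_eq_iff)
  define d where "d k = x$k / x$i" for k
  have "(\<Sum>k\<in>UNIV. x$k *\<^sub>R v k) = 0"
    using x(2) unfolding matrix_mult_sum v_def by (simp add: scalar_mult_eq_scaleR)
  moreover have "v i + (\<Sum>k\<in>UNIV - {i}. d k *\<^sub>R v k) = (1 / x$i) *\<^sub>R (\<Sum>k\<in>UNIV. x$k *\<^sub>R v k)"
  proof -
    have "(\<Sum>k\<in>UNIV. x$k *\<^sub>R v k) = x$i *\<^sub>R v i + (\<Sum>k\<in>UNIV - {i}. x$k *\<^sub>R v k)"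
      by (simp add: sum.remove)
    then show ?thesis using \<open>x$i \<noteq> 0\<close>
      by (simp add: d_def scaleR_add_right scaleR_sum_right divide_inverse mult.commute)
  qed
  ultimately have "v i + (\<Sum>k\<in>UNIV - {i}. d k *\<^sub>R v k) = 0" by simp
  then have "f v = f (v(i := 0))" using add_combination[of "UNIV - {i}" i v d] by simp
  then show ?thesis using zero_vector by (simp add: v_def)
qed

lemma scale_all: "f (\<lambda>k. d k *\<^sub>R v k) = (\<Prod>k\<in>UNIV. d k)\<^sup>2 * f v"
proof -
  have "f (\<lambda>k. if k \<in> S then d k *\<^sub>R v k else v k) = (\<Prod>k\<in>S. d k)\<^sup>2 * f v" if "finite S" for S
    using that
  proof (induction S rule: finite_induct)
    case (insert j S)
    define w where "w = (\<lambda>k. if k \<in> S then d k *\<^sub>R v k else v k)"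
    have "(\<lambda>k. if k \<in> insert j S then d k *\<^sub>R v k else v k) = w(j := d j *\<^sub>R w j)"
      using insert by (auto simp: w_def fun_eq_iff)
    then have "f (\<lambda>k. if k \<in> insert j S then d k *\<^sub>R v k else v k) = (d j)\<^sup>2 * f w"
      by (simp add: scale)
    then show ?case using insert by (simp add: w_def power_mult_distrib)
  qed simp
  from this[of UNIV] show ?thesis by simp
qed

lemma columns_mult_diagonal:
  fixes A V :: "real^'n^'n"
  assumes diagonal: "\<And>i j. i \<noteq> j \<Longrightarrow> A$i$j = 0"
  shows "f (\<lambda>k. column k (V ** A)) = (det A)\<^sup>2 * f (\<lambda>k. column k V)"
proof -
  have "column k (V ** A) = A$k$k *\<^sub>R column k V" for k
  proof -
    have "(\<Sum>j\<in>UNIV. V$r$j * A$j$k) = (\<Sum>j\<in>UNIV. if j = k then V$r$k * A$k$k else 0)" for r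
      by (rule sum.cong) (auto simp: diagonal)
    then show ?thesis by (simp add: column_def matrix_matrix_mult_def vec_eq_iff mult.commute)
  qed
  then show ?thesis by (simp add: scale_all det_diagonal diagonal)
qed

lemma columns_mult_transposition:
  fixes V :: "real^'n^'n"
  assumes mn: "m \<noteq> n"
  defines "P \<equiv> (\<chi> i j. mat 1 $ i $ Transposition.transpose m n j) :: real^'n^'n"
  shows "f (\<lambda>k. column k (V ** P)) = (det P)\<^sup>2 * f (\<lambda>k. column k V)"
proof -
  have "column k (V ** P) = column (Transposition.transpose m n k) V" for k
    by (simp add: P_def column_def matrix_matrix_mult_def vec_eq_iff mat_def
        if_distrib[of "\<lambda>x. _ * x"] cong: if_cong)
  then have "(\<lambda>k. column k (V ** P)) = (\<lambda>k. column k V)(m := column n V, n := column m V)"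
    by (auto simp: fun_eq_iff)
  moreover have "det P = of_int (sign (Transposition.transpose m n)) * det (mat 1 :: real^'n^'n)"
    unfolding P_def by (rule det_permute_columns) (simp add: permutes_swap_id)
  then have "det P = -1" using mn by (simp add: sign_swap_id)
  ultimately show ?thesis using swap[OF mn] by simp
qed

lemma columns_mult_shear:
  fixes V :: "real^'n^'n" and c :: real
  assumes mn: "m \<noteq> n"
  defines "E \<equiv> (\<chi> i j. if i = m \<and> j = n then c else of_bool (i = j)) :: real^'n^'n"
  shows "f (\<lambda>k. column k (V ** E)) = (det E)\<^sup>2 * f (\<lambda>k. column k V)"
proof -
  have E: "E$j$k = of_bool (j = k) + (if k = n then (if j = m then c else 0) else 0)" for j k
    using mn by (auto simp: E_def)
  have "column k (V ** E) = column k V + (if k = n then c *\<^sub>R column m V else 0)" for k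
  proof -
    have "(\<Sum>j\<in>UNIV. V$r$j * E$j$k) = V$r$k + (if k = n then c * V$r$m else 0)" for r
      unfolding E by (simp add: distrib_left sum.distrib of_bool_def if_distrib[of "\<lambda>x. _ * x"]
          cong: if_cong)
    then show ?thesis by (auto simp: column_def matrix_matrix_mult_def vec_eq_iff)
  qed
  then have "(\<lambda>k. column k (V ** E)) = (\<lambda>k. column k V)(n := column n V + c *\<^sub>R column m V)"
    by (auto simp: fun_eq_iff)
  moreover have "E = (\<chi> k. if k = m then row m (mat 1) + c *s row n (mat 1) else row k (mat 1))"
    using mn by (auto simp: E_def vec_eq_iff row_def mat_def)
  then have "det E = 1" using det_row_operation[OF mn, of "mat 1" c] by simp
  ultimately show ?thesis using add_multiple[of n m "\<lambda>k. column k V" c] mn by simp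
qed

lemma columns_mult: "f (\<lambda>k. column k (V ** A)) = (det A)\<^sup>2 * f (\<lambda>k. column k V)"
proof -
  have "\<forall>V. f (\<lambda>k. column k (V ** A)) = (det A)\<^sup>2 * f (\<lambda>k. column k V)"
  proof (rule induct_matrix_elementary)
    fix A B :: "real^'n^'n"
    assume "\<forall>V. f (\<lambda>k. column k (V ** A)) = (det A)\<^sup>2 * f (\<lambda>k. column k V)"
      and "\<forall>V. f (\<lambda>k. column k (V ** B)) = (det B)\<^sup>2 * f (\<lambda>k. column k V)"
    then show "\<forall>V. f (\<lambda>k. column k (V ** (A ** B))) = (det (A ** B))\<^sup>2 * f (\<lambda>k. column k V)"
      by (simp add: matrix_mul_assoc det_mul power_mult_distrib)
  next
    fix A :: "real^'n^'n" and i
    assume "row i A = 0"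
    then have "det A = 0" by (rule det_zero_row)
    then show "\<forall>V. f (\<lambda>k. column k (V ** A)) = (det A)\<^sup>2 * f (\<lambda>k. column k V)"
      by (simp add: singular_columns det_mul)
  qed (simp_all add: columns_mult_diagonal columns_mult_transposition columns_mult_shear)
  then show ?thesis by blast
qed

lemma columns_eq_det_squared:
  "f (\<lambda>k. column k W) = (det W)\<^sup>2 * f (\<lambda>k. column k (mat 1 :: real^'n^'n))"
  using columns_mult[of "mat 1" W] by simp

end

lemma mixed_discr_outer_prod_columns:
  fixes W :: "real^'n^'n"
  shows "mixed_discr (\<lambda>k. outer_prod (column k W)) = (det W)\<^sup>2 / fact CARD('n)"
proof -
  have perm_term: "det (\<chi> i j. outer_prod (column (\<sigma> j) W) $ i $ j) =
      det W * (of_int (sign \<sigma>) * (\<Prod>j\<in>UNIV. W$j$(\<sigma> j)))"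
    if \<sigma>: "\<sigma> permutes (UNIV::'n set)" for \<sigma>
  proof -
    define M :: "real^'n^'n" where "M = (\<chi> i j. W$i$(\<sigma> j))"
    define Dg :: "real^'n^'n" where "Dg = (\<chi> i j. if i = j then W$j$(\<sigma> j) else 0)"
    have "(\<chi> i j. outer_prod (column (\<sigma> j) W) $ i $ j) = M ** Dg"
      by (simp add: M_def Dg_def outer_prod_def column_def matrix_matrix_mult_def vec_eq_iff
          if_distrib[of "\<lambda>x. _ * x"] cong: if_cong)
    moreover have "det M = of_int (sign \<sigma>) * det W"
      unfolding M_def by (rule det_permute_columns[OF \<sigma>])
    moreover have "det Dg = (\<Prod>j\<in>UNIV. W$j$(\<sigma> j))"
      unfolding Dg_def by (subst det_diagonal) auto
    ultimately show ?thesis by (simp add: det_mul)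
  qed
  have "mixed_discr (\<lambda>k. outer_prod (column k W)) = (1 / fact CARD('n)) *
      (\<Sum>\<sigma> | \<sigma> permutes (UNIV::'n set). det W * (of_int (sign \<sigma>) * (\<Prod>j\<in>UNIV. W$j$(\<sigma> j))))"
    unfolding mixed_discr_def by (simp add: perm_term)
  also have "\<dots> = (1 / fact CARD('n)) * (det W * det W)"
    by (simp add: sum_distrib_left[symmetric] det_def)
  finally show ?thesis by (simp add: power2_eq_square)
qed

text \<open>Argument i of A occupies exactly one column of each term of the permutation formula,
  where the determinant is additive.\<close>
lemma mixed_discr_fun_upd_add:
  fixes A :: "'n::finite \<Rightarrow> real^'n^'n"
  shows "mixed_discr (A(i := B + B')) = mixed_discr (A(i := B)) + mixed_discr (A(i := B'))"
proof -
  have perm_term_add: "det (\<chi> r j. (A(i := B + B')) (\<sigma> j) $ r $ j) =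
      det (\<chi> r j. (A(i := B)) (\<sigma> j) $ r $ j) + det (\<chi> r j. (A(i := B')) (\<sigma> j) $ r $ j)"
    if \<sigma>: "\<sigma> permutes (UNIV::'n set)" for \<sigma>
  proof -
    define k where "k = inv \<sigma> i"
    have \<sigma>k: "\<sigma> j = i \<longleftrightarrow> j = k" for j
      using \<sigma> unfolding k_def by (metis permutes_inverses(1) permutes_inverses(2))
    have transp: "det (\<chi> r j. (A(i := X)) (\<sigma> j) $ r $ j) =
        det (\<chi> j. if j = k then (\<chi> r. X $ r $ j) else (\<chi> r. A (\<sigma> j) $ r $ j))" for X
    proof -
      have "det (\<chi> r j. (A(i := X)) (\<sigma> j) $ r $ j) =
          det (transpose (\<chi> r j. (A(i := X)) (\<sigma> j) $ r $ j))"
        by simp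
      also have "transpose (\<chi> r j. (A(i := X)) (\<sigma> j) $ r $ j) =
          (\<chi> j. if j = k then (\<chi> r. X $ r $ j) else (\<chi> r. A (\<sigma> j) $ r $ j))"
        by (auto simp: transpose_def vec_eq_iff \<sigma>k)
      finally show ?thesis .
    qed
    have "(\<chi> j. if j = k then (\<chi> r. (B + B') $ r $ j) else (\<chi> r. A (\<sigma> j) $ r $ j)) =
        (\<chi> j. if j = k then (\<chi> r. B $ r $ j) + (\<chi> r. B' $ r $ j) else (\<chi> r. A (\<sigma> j) $ r $ j))"
      by (simp add: vec_eq_iff)
    then show ?thesis unfolding transp by (simp add: det_row_add)
  qed
  have "(\<Sum>\<sigma> | \<sigma> permutes (UNIV::'n set). det (\<chi> r j. (A(i := B + B')) (\<sigma> j) $ r $ j)) =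
      (\<Sum>\<sigma> | \<sigma> permutes (UNIV::'n set).
        det (\<chi> r j. (A(i := B)) (\<sigma> j) $ r $ j) + det (\<chi> r j. (A(i := B')) (\<sigma> j) $ r $ j))"
    by (rule sum.cong) (simp_all only: mem_Collect_eq perm_term_add)
  then show ?thesis
    unfolding mixed_discr_def by (simp add: sum.distrib distrib_left)
qed

lemma psd_rank_one_decomposition:
  fixes M :: "real^'n^'n"
  assumes M: "psd M"
  obtains u :: "'n \<Rightarrow> 'n \<Rightarrow> real^'n" and d :: "'n \<Rightarrow> real^'n" and w :: "'n \<Rightarrow> 'n \<Rightarrow> real^'n"
  where "M + (\<Sum>p\<in>UNIV. \<Sum>q\<in>UNIV. outer_prod (u p q)) =
    (\<Sum>p\<in>UNIV. outer_prod (d p)) + (\<Sum>p\<in>UNIV. \<Sum>q\<in>UNIV. outer_prod (w p q))"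
proof
  \<comment> \<open>For p \<noteq> q, w p q w p q^T - u p q u p q^T has the entry M$p$q / 2 at (p,q) and (q,p),
    and zeros elsewhere.\<close>
  define s where "s p q = sgn (M$p$q)" for p q
  define h where "h p q = (if p = q then 0 else sqrt (\<bar>M$p$q\<bar> / 4))" for p q
  define u :: "'n \<Rightarrow> 'n \<Rightarrow> real^'n"
    where "u p q = (\<chi> t. h p q * (of_bool (t = p) - s p q * of_bool (t = q)))" for p q
  define w :: "'n \<Rightarrow> 'n \<Rightarrow> real^'n"
    where "w p q = (\<chi> t. h p q * (of_bool (t = p) + s p q * of_bool (t = q)))" for p q
  define d :: "'n \<Rightarrow> real^'n" where "d p = (\<chi> t. sqrt (M$p$p) * of_bool (t = p))" for p
  define g where "g p q = (if p = q then 0 else M$p$q / 2)" for p q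
  have h2: "2 * (h p q)\<^sup>2 * s p q = g p q" for p q
    by (simp add: h_def s_def g_def abs_mult_sgn)
  have difference: "w p q $ r * w p q $ c - u p q $ r * u p q $ c =
      g p q * (of_bool (r = p) * of_bool (c = q) + of_bool (r = q) * of_bool (c = p))" for p q r c
  proof -
    have "w p q $ r * w p q $ c - u p q $ r * u p q $ c =
        2 * (h p q)\<^sup>2 * s p q * (of_bool (r = p) * of_bool (c = q) + of_bool (r = q) * of_bool (c = p))"
      by (simp add: u_def w_def power2_eq_square algebra_simps)
    then show ?thesis by (simp only: h2)
  qed
  have "M$r$c + (\<Sum>p\<in>UNIV. \<Sum>q\<in>UNIV. u p q $ r * u p q $ c) =
      (\<Sum>p\<in>UNIV. d p $ r * d p $ c) + (\<Sum>p\<in>UNIV. \<Sum>q\<in>UNIV. w p q $ r * w p q $ c)" for r c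
  proof -
    have "(\<Sum>p\<in>UNIV. \<Sum>q\<in>UNIV. w p q $ r * w p q $ c) - (\<Sum>p\<in>UNIV. \<Sum>q\<in>UNIV. u p q $ r * u p q $ c)
        = (\<Sum>p\<in>UNIV. \<Sum>q\<in>UNIV. g p q * (of_bool (r = p) * of_bool (c = q) + of_bool (r = q) * of_bool (c = p)))"
      by (simp add: sum_subtractf[symmetric] difference)
    also have "\<dots> = g r c + g c r"
    proof -
      have delta: "(\<Sum>p\<in>UNIV. \<Sum>q\<in>UNIV. if a = p then if b = q then g p q else 0 else 0) = g a b"
        for a b
      proof -
        have "(\<Sum>q\<in>UNIV. if a = p then if b = q then g p q else 0 else 0) =
            (if a = p then g p b else 0)" for p
          by (cases "a = p") simp_all
        then show ?thesis by simp
      qed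
      show ?thesis
        by (simp add: distrib_left sum.distrib of_bool_def if_distrib[of "\<lambda>x. _ * x"] delta
            cong: if_cong)
    qed
    also have "\<dots> = (if r = c then 0 else M$r$c)" by (simp add: g_def psd_symmetric[OF M, of c r])
    finally have off_diagonal: "(\<Sum>p\<in>UNIV. \<Sum>q\<in>UNIV. w p q $ r * w p q $ c) -
        (\<Sum>p\<in>UNIV. \<Sum>q\<in>UNIV. u p q $ r * u p q $ c) = (if r = c then 0 else M$r$c)" .
    have diagonal: "(\<Sum>p\<in>UNIV. d p $ r * d p $ c) = (if r = c then M$r$r else 0)"
      using psd_diag_nonneg[OF M]
      by (simp add: d_def of_bool_def if_distrib[of "\<lambda>x. _ * x"] cong: if_cong)
    have "M$r$c = (if r = c then M$r$r else 0) + (if r = c then 0 else M$r$c)" by simp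
    then show ?thesis using off_diagonal diagonal by linarith
  qed
  then show "M + (\<Sum>p\<in>UNIV. \<Sum>q\<in>UNIV. outer_prod (u p q)) =
    (\<Sum>p\<in>UNIV. outer_prod (d p)) + (\<Sum>p\<in>UNIV. \<Sum>q\<in>UNIV. outer_prod (w p q))"
    by (simp add: vec_eq_iff outer_prod_def)
qed

lemma psd_additive_eq_0_if_outer_prods:
  fixes \<phi> :: "real^'n^'n \<Rightarrow> real"
  assumes additive: "\<And>B B'. psd B \<Longrightarrow> psd B' \<Longrightarrow> \<phi> (B + B') = \<phi> B + \<phi> B'"
    and outer: "\<And>y. \<phi> (outer_prod y) = 0"
    and "psd M"
  shows "\<phi> M = 0"
proof -
  have sum: "\<phi> (\<Sum>k\<in>K. X k) = 0"
    if "finite K" "\<And>k. k \<in> K \<Longrightarrow> psd (X k) \<and> \<phi> (X k) = 0" for K and X :: "'a \<Rightarrow> real^'n^'n"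
    using that
  proof (induction K rule: finite_induct)
    case empty
    show ?case using additive[OF psd_zero psd_zero] by simp
  next
    case (insert j K)
    then have "psd (X j)" "psd (\<Sum>k\<in>K. X k)" by (auto intro: psd_sum)
    then have "\<phi> (\<Sum>k\<in>insert j K. X k) = \<phi> (X j) + \<phi> (\<Sum>k\<in>K. X k)"
      using insert.hyps by (simp add: additive)
    with insert show ?case by simp
  qed
  have psd_double_sum: "psd (\<Sum>p\<in>UNIV. \<Sum>q\<in>UNIV. outer_prod (x p q))" for x :: "'n \<Rightarrow> 'n \<Rightarrow> real^'n"
    by (intro psd_sum) (auto simp: psd_outer_prod)
  have single_sum: "\<phi> (\<Sum>p\<in>UNIV. outer_prod (x p)) = 0" for x :: "'n \<Rightarrow> real^'n"
    by (rule sum) (auto simp: psd_outer_prod outer)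
  have double_sum: "\<phi> (\<Sum>p\<in>UNIV. \<Sum>q\<in>UNIV. outer_prod (x p q)) = 0" for x :: "'n \<Rightarrow> 'n \<Rightarrow> real^'n"
    by (rule sum) (auto intro: psd_sum simp: psd_outer_prod single_sum)
  obtain u w :: "'n \<Rightarrow> 'n \<Rightarrow> real^'n" and d :: "'n \<Rightarrow> real^'n" where decomposition: "M + (\<Sum>p\<in>UNIV. \<Sum>q\<in>UNIV. outer_prod (u p q)) =
      (\<Sum>p\<in>UNIV. outer_prod (d p)) + (\<Sum>p\<in>UNIV. \<Sum>q\<in>UNIV. outer_prod (w p q))"
    by (rule psd_rank_one_decomposition[OF \<open>psd M\<close>])
  have "\<phi> M = \<phi> M + \<phi> (\<Sum>p\<in>UNIV. \<Sum>q\<in>UNIV. outer_prod (u p q))"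
    by (simp only: double_sum add_0_right)
  also have "\<dots> = \<phi> (M + (\<Sum>p\<in>UNIV. \<Sum>q\<in>UNIV. outer_prod (u p q)))"
    by (rule additive[OF \<open>psd M\<close> psd_double_sum, symmetric])
  also have "\<dots> = \<phi> (\<Sum>p\<in>UNIV. outer_prod (d p)) + \<phi> (\<Sum>p\<in>UNIV. \<Sum>q\<in>UNIV. outer_prod (w p q))"
    unfolding decomposition by (rule additive[OF psd_sum psd_double_sum]) (auto simp: psd_outer_prod)
  also have "\<dots> = 0" by (simp only: single_sum double_sum add_0_right)
  finally show ?thesis .
qed

lemma multiadditive_eq_0_if_outer_prods:
  fixes G :: "('n::finite \<Rightarrow> real^'n^'n) \<Rightarrow> real"
  assumes additive: "\<And>A i B B'. (\<forall>k. psd (A k)) \<Longrightarrow> psd B \<Longrightarrow> psd B' \<Longrightarrow>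
      G (A(i := B + B')) = G (A(i := B)) + G (A(i := B'))"
    and outer: "\<And>v. G (\<lambda>k. outer_prod (v k)) = 0"
    and psd: "\<forall>k. psd (A k)"
  shows "G A = 0"
proof -
  have "G (\<lambda>k. if k \<in> S then A k else outer_prod (v k)) = 0" if "finite S" for S v
    using that
  proof (induction S arbitrary: v rule: finite_induct)
    case empty
    then show ?case using outer by simp
  next
    case (insert i S)
    define A' where "A' = (\<lambda>k. if k \<in> S then A k else outer_prod (v k))"
    have A': "(\<lambda>k. if k \<in> insert i S then A k else outer_prod (v k)) = A'(i := A i)"
      using insert by (auto simp: A'_def fun_eq_iff)
    have psd_A': "\<forall>k. psd (A' k)" using psd by (simp add: A'_def psd_outer_prod)
    have "A'(i := outer_prod y) = (\<lambda>k. if k \<in> S then A k else outer_prod ((v(i := y)) k))" for y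
      using insert.hyps(2) by (auto simp: A'_def fun_eq_iff)
    then have outer_A': "G (A'(i := outer_prod y)) = 0" for y using insert.IH by simp
    have "G (A'(i := A i)) = 0"
      using psd_additive_eq_0_if_outer_prods[of "\<lambda>B. G (A'(i := B))", OF additive[OF psd_A']]
        outer_A' psd by simp
    then show ?case by (simp only: A')
  qed
  from this[of UNIV] show ?thesis by simp
qed

locale discriminant_form =
  fixes F :: "('n::finite \<Rightarrow> real^'n^'n) \<Rightarrow> real"
  assumes nonneg: "\<And>A. (\<forall>i. psd (A i)) \<Longrightarrow> 0 \<le> F A"
    and additive: "\<And>A i B B'. (\<forall>k. psd (A k)) \<Longrightarrow> psd B \<Longrightarrow> psd B' \<Longrightarrow>
        F (A(i := B + B')) = F (A(i := B)) + F (A(i := B'))"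
    and vanish: "\<And>A i j c. (\<forall>k. psd (A k)) \<Longrightarrow> i \<noteq> j \<Longrightarrow> rank (A i) = 1 \<Longrightarrow>
        rank (A j) = 1 \<Longrightarrow> A i = c *\<^sub>R A j \<Longrightarrow> F A = 0"
begin

lemma fun_upd_scaleR:
  assumes A: "\<forall>k. psd (A k)" and M: "psd M" and "0 \<le> s"
  shows "F (A(i := s *\<^sub>R M)) = s * F (A(i := M))"
  using additive_nonneg_imp_linear[of "\<lambda>t. F (A(i := t *\<^sub>R M))", OF _ _ \<open>0 \<le> s\<close>]
    additive[OF A psd_scaleR[OF M] psd_scaleR[OF M]] nonneg A psd_scaleR[OF M]
  by (simp add: scaleR_add_left)

lemma fun_upd_parallel_outer_prod:
  assumes A: "\<forall>k. psd (A k)" and "A j = outer_prod y" and "i \<noteq> j"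
  shows "F (A(i := outer_prod (c *\<^sub>R y))) = 0"
proof (cases "c *\<^sub>R y = 0")
  case True
  then have "outer_prod (c *\<^sub>R y) = 0" by (simp only: outer_prod_zero)
  then show ?thesis using additive[OF A psd_zero psd_zero, of i] by simp
next
  case False
  then have "y \<noteq> 0" by auto
  show ?thesis
  proof (rule vanish[of _ i j "c\<^sup>2"])
    show "\<forall>k. psd ((A(i := outer_prod (c *\<^sub>R y))) k)" using A by (simp add: psd_outer_prod)
  qed (use assms rank_outer_prod[OF False] rank_outer_prod[OF \<open>y \<noteq> 0\<close>]
      in \<open>auto simp: outer_prod_scaleR\<close>)
qed

definition F_outer :: "('n \<Rightarrow> real^'n) \<Rightarrow> real" where
  "F_outer v = F (\<lambda>k. outer_prod (v k))"

lemma F_outer_fun_upd: "F_outer (v(i := x)) = F ((\<lambda>k. outer_prod (v k))(i := outer_prod x))"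
  unfolding F_outer_def by (rule arg_cong[where f = F]) auto

text \<open>The parallelogram identity for outer_prod, together with the vanishing of F when
  argument i is parallel to argument j, gives Jensen's equation for p; a nonnegative solution
  is constant.\<close>
lemma F_outer_add_multiple:
  assumes "i \<noteq> j"
  shows "F_outer (v(i := v i + t *\<^sub>R v j)) = F_outer v"
proof -
  define A where "A = (\<lambda>k. outer_prod (v k))"
  have A: "\<forall>k. psd (A k)" by (simp add: A_def psd_outer_prod)
  define y where "y = t *\<^sub>R v j"
  define p where "p s = F (A(i := outer_prod (v i + s *\<^sub>R y)))" for s
  have parallel: "F (A(i := outer_prod (c *\<^sub>R y))) = 0" for c
    unfolding y_def using fun_upd_parallel_outer_prod[OF A _ assms, of "v j" "c * t"]
    by (simp add: A_def)
  have "p s = p 0" for s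
  proof (rule nonneg_jensen_equation_imp_const)
    fix s
    show "0 \<le> p s" unfolding p_def using A by (intro nonneg) (auto simp: psd_outer_prod)
  next
    fix s t
    let ?Z = "outer_prod (v i + s *\<^sub>R y)" and ?W = "outer_prod (t *\<^sub>R y)"
    have parallelogram: "outer_prod (v i + (s + t) *\<^sub>R y) + outer_prod (v i + (s - t) *\<^sub>R y) =
        (?Z + ?Z) + (?W + ?W)"
      by (simp add: outer_prod_scaleR power_mult_distrib)
        (simp add: outer_prod_def vec_eq_iff algebra_simps power2_eq_square)
    have "p (s + t) + p (s - t) =
        F (A(i := outer_prod (v i + (s + t) *\<^sub>R y) + outer_prod (v i + (s - t) *\<^sub>R y)))"
      unfolding p_def by (rule additive[OF A psd_outer_prod psd_outer_prod, symmetric])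
    also have "\<dots> = F (A(i := ?Z + ?Z)) + F (A(i := ?W + ?W))"
      unfolding parallelogram by (rule additive[OF A psd_add psd_add]) (rule psd_outer_prod)+
    also have "\<dots> = F (A(i := ?Z)) + F (A(i := ?Z)) + (F (A(i := ?W)) + F (A(i := ?W)))"
      by (simp only: additive[OF A psd_outer_prod psd_outer_prod])
    finally show "p (s + t) + p (s - t) = 2 * p s" by (simp add: p_def parallel)
  qed
  from this[of 1] have "F (A(i := outer_prod (v i + t *\<^sub>R v j))) = F A"
    by (simp add: p_def y_def A_def fun_upd_idem)
  then show ?thesis by (subst F_outer_fun_upd) (simp only: A_def F_outer_def)
qed

lemma F_outer_scaleR: "F_outer (v(i := c *\<^sub>R v i)) = c\<^sup>2 * F_outer v"
proof -
  have "F_outer (v(i := c *\<^sub>R v i)) = F ((\<lambda>k. outer_prod (v k))(i := c\<^sup>2 *\<^sub>R outer_prod (v i)))"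
    by (simp add: F_outer_fun_upd outer_prod_scaleR)
  also have "\<dots> = c\<^sup>2 * F ((\<lambda>k. outer_prod (v k))(i := outer_prod (v i)))"
    by (rule fun_upd_scaleR) (auto simp: psd_outer_prod)
  also have "(\<lambda>k. outer_prod (v k))(i := outer_prod (v i)) = (\<lambda>k. outer_prod (v k))" by auto
  finally show ?thesis by (simp only: F_outer_def)
qed

sublocale F_outer: squared_volume F_outer
  by unfold_locales (use F_outer_add_multiple F_outer_scaleR in auto)

lemma F_outer_eq_mixed_discr:
  "F_outer v = fact CARD('n) * F_outer (\<lambda>k. column k (mat 1 :: real^'n^'n)) *
     mixed_discr (\<lambda>k. outer_prod (v k))"
proof -
  define W :: "real^'n^'n" where "W = (\<chi> r k. v k $ r)"
  have columns: "column k W = v k" for k by (simp add: W_def column_def vec_eq_iff)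
  show ?thesis
    using F_outer.columns_eq_det_squared[of W] mixed_discr_outer_prod_columns[of W]
    by (simp add: columns)
qed

theorem eq_mixed_discr:
  assumes "\<forall>i. psd (A i)"
  shows "F A = fact CARD('n) * F_outer (\<lambda>k. column k (mat 1 :: real^'n^'n)) * mixed_discr A"
proof -
  let ?a = "fact CARD('n) * F_outer (\<lambda>k. column k (mat 1 :: real^'n^'n))"
  have "F A - ?a * mixed_discr A = 0"
  proof (rule multiadditive_eq_0_if_outer_prods[where G = "\<lambda>A. F A - ?a * mixed_discr A"])
    show "F (A(i := B + B')) - ?a * mixed_discr (A(i := B + B')) =
        F (A(i := B)) - ?a * mixed_discr (A(i := B)) + (F (A(i := B')) - ?a * mixed_discr (A(i := B')))"
      if "\<forall>k. psd (A k)" "psd B" "psd B'" for A i B B'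
      using additive[OF that] by (simp add: mixed_discr_fun_upd_add algebra_simps)
    show "F (\<lambda>k. outer_prod (v k)) - ?a * mixed_discr (\<lambda>k. outer_prod (v k)) = 0" for v
      using F_outer_eq_mixed_discr[of v] by (simp only: F_outer_def diff_self)
  qed (rule assms)
  then show ?thesis by simp
qed

end

theorem theorem2:
  fixes F :: "('n::finite \<Rightarrow> real^'n^'n) \<Rightarrow> real"
  assumes nonneg: "\<And>A. (\<forall>i. psd (A i)) \<Longrightarrow> 0 \<le> F A"
    and additive: "\<And>A i B B'. (\<forall>k. psd (A k)) \<Longrightarrow> psd B \<Longrightarrow> psd B' \<Longrightarrow>
        F (A(i := B + B')) = F (A(i := B)) + F (A(i := B'))"
    and vanish: "\<And>A i j c. (\<forall>k. psd (A k)) \<Longrightarrow> i \<noteq> j \<Longrightarrow> rank (A i) = 1 \<Longrightarrow>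
        rank (A j) = 1 \<Longrightarrow> A i = c *\<^sub>R A j \<Longrightarrow> F A = 0"
  shows "\<exists>a\<ge>0. \<forall>A. (\<forall>i. psd (A i)) \<longrightarrow> F A = a * mixed_discr A"
proof -
  interpret discriminant_form F using assms by unfold_locales
  have "0 \<le> fact CARD('n) * F_outer (\<lambda>k. column k (mat 1 :: real^'n^'n))"
    unfolding F_outer_def by (simp add: nonneg psd_outer_prod)
  then show ?thesis using eq_mixed_discr by blast
qed

end
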